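(* A power series $\varphi(x)=\sum_{i\ge0}\gamma_ix^i\in\mathbb{K}[[x]]$ is an element of $\mathcal{F}_1$ if and only if $$\sum_{i=0}^m(-1)^i\binom{2m-1}{m-i}\binom{m+i}{i}\gamma_{m+i-1}=0$$ for each $m\ge1$.
   Context: $\mathbb{K}\in\{\mathbb{Q},\mathbb{R},\mathbb{C}\}$. $\mathcal{F}_1$ denotes the space of $\varphi\in\mathbb{K}[[x]]$ with $\varphi(x/(x-1))=(1-x)\varphi(x)$. *)

theory Defs
  imports "HOL-Computational_Algebra.Formal_Power_Series" Complex_Main
begin

text \<open>The power series x/(x-1) = x * (x - 1)^(-1) in K[[x]] (its constant term is 0,
  so substitution into it is well defined).\<close>
definition fps_x_over_x_minus_1 :: "'a::field fps" where
  "fps_x_over_x_minus_1 = fps_X * inverse (fps_X - 1)"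

definition F1 :: "'a::field fps set" where
  "F1 = {\<phi>. fps_compose \<phi> fps_x_over_x_minus_1 = (1 - fps_X) * \<phi>}"

definition coeff_cond :: "'a::field fps \<Rightarrow> bool" where
  "coeff_cond \<phi> \<longleftrightarrow> (\<forall>m::nat. m \<ge> 1 \<longrightarrow>
     (\<Sum>i=0..m. (-1)^i * of_nat ((2*m - 1) choose (m - i)) * of_nat ((m + i) choose i)
                 * fps_nth \<phi> (m + i - 1)) = 0)"

end

theory Submission
  imports Defs
begin

text \<open>
  Put y = x/(x-1) and T \<phi> = \<phi>(y)/(1-x) (the map twist). Since y(y(x)) = x, T is a linear involution of K[[x]]
  whose fixed space is F_1. Let \<lambda>_n(\<phi>) be the coefficient of x^(2n+1) in \<phi>(x) (x-1)^n (x-2).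
  The m-th coefficient condition says exactly binom(2m-1, m) \<lambda>_(m-1)(\<phi>) = 0, and a computation
  on monomials shows \<lambda>_n(T \<phi>) = -\<lambda>_n(\<phi>); so every \<lambda>_n vanishes on F_1.
  Conversely, if all \<lambda>_n(\<phi>) vanish, put \<chi> = T \<phi> - \<phi>, so T \<chi> = -\<chi>. As T multiplies the lowest
  nonzero coefficient of \<chi> by (-1)^d, d its index, d must be odd, d = 2n+1; then
  \<lambda>_n(\<chi>) = -2 (-1)^n \<chi>_d \<noteq> 0, while \<lambda>_n(\<chi>) = -2 \<lambda>_n(\<phi>) = 0. Hence \<chi> = 0, i.e. \<phi> \<in> F_1.
\<close>

unbundle fps_syntax

definition inv_X_minus_1 :: "'a::field fps" where
  "inv_X_minus_1 = inverse (fps_X - 1)"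

lemma inv_X_minus_1_mult: "inv_X_minus_1 * (fps_X - 1) = (1::'a::field fps)"
  unfolding inv_X_minus_1_def by (rule inverse_mult_eq_1) simp

lemma inverse_1_minus_X: "inverse (1 - fps_X) = - (inv_X_minus_1::'a::field fps)"
  unfolding inv_X_minus_1_def by (metis fps_inverse_minus minus_diff_eq)

lemma inv_X_minus_1_nth: "(inv_X_minus_1 :: 'a::field fps) $ j = -1"
proof -
  have "inverse (1 - fps_X) = Abs_fps (\<lambda>_. 1::'a)"
    by (metis fps_inverse_gp' fps_inverse_idempotent fps_nth_Abs_fps one_neq_zero)
  then show ?thesis
    by (metis fps_neg_nth fps_nth_Abs_fps inverse_1_minus_X minus_minus)
qed

lemma inv_X_minus_1_power_nth:
  "(inv_X_minus_1 ^ Suc k :: 'a::field fps) $ j = (-1) ^ Suc k * of_nat ((k + j) choose j)"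
proof (induction k arbitrary: j)
  case 0
  then show ?case by (simp add: inv_X_minus_1_nth)
next
  case (Suc k)
  have "(inv_X_minus_1 ^ Suc (Suc k) :: 'a fps) $ j = (inv_X_minus_1 ^ Suc k * inv_X_minus_1) $ j"
    by (simp only: power_Suc2[of _ "Suc k"])
  also have "\<dots> = (\<Sum>i\<le>j. (-1) ^ Suc k * of_nat ((k + i) choose i) * (-1))"
    by (simp only: fps_mult_nth Suc.IH inv_X_minus_1_nth atLeast0AtMost)
  also have "\<dots> = (-1) ^ Suc (Suc k) * of_nat (\<Sum>i\<le>j. (k + i) choose i)"
    by (simp add: sum_distrib_left)
  finally show ?case by (simp add: sum_choose_lower)
qed

lemma X_minus_1_power_nth:
  "((fps_X - 1) ^ a :: 'a::comm_ring_1 fps) $ j = (-1) ^ (a + j) * of_nat (a choose j)"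
proof (induction a arbitrary: j)
  case 0
  then show ?case by (cases j) auto
next
  case (Suc a)
  then show ?case
    by (cases j) (simp_all add: left_diff_distrib fps_X_mult_nth algebra_simps)
qed

lemma fps_x_over_x_minus_1_eq: "fps_x_over_x_minus_1 = fps_X * (inv_X_minus_1::'a::field fps)"
  by (simp add: fps_x_over_x_minus_1_def inv_X_minus_1_def)

lemma fps_x_over_x_minus_1_nth_0 [simp]: "(fps_x_over_x_minus_1::'a::field fps) $ 0 = 0"
  by (simp add: fps_x_over_x_minus_1_eq)

lemma inv_X_minus_1_compose:
  "inv_X_minus_1 oo fps_x_over_x_minus_1 = (fps_X - 1 :: 'a::field fps)"
proof -
  let ?y = "fps_x_over_x_minus_1 :: 'a fps"
  have "?y - 1 = fps_X * inv_X_minus_1 - inv_X_minus_1 * (fps_X - 1)"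
    by (simp add: fps_x_over_x_minus_1_eq inv_X_minus_1_mult)
  then have "?y - 1 = inv_X_minus_1"
    by (simp add: algebra_simps)
  have "(inv_X_minus_1 oo ?y) * (?y - 1) = (inv_X_minus_1 * (fps_X - 1)) oo ?y"
    by (simp add: fps_compose_mult_distrib fps_compose_sub_distrib)
  then have "(inv_X_minus_1 oo ?y) * inv_X_minus_1 = 1"
    by (simp add: inv_X_minus_1_mult \<open>?y - 1 = inv_X_minus_1\<close>)
  then have "(inv_X_minus_1 oo ?y) * (inv_X_minus_1 * (fps_X - 1)) = fps_X - 1"
    by (simp flip: mult.assoc)
  then show ?thesis
    by (simp only: inv_X_minus_1_mult mult_1_right)
qed

lemma fps_x_over_x_minus_1_compose_self:
  "fps_x_over_x_minus_1 oo fps_x_over_x_minus_1 = (fps_X :: 'a::field fps)"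
proof -
  let ?y = "fps_x_over_x_minus_1 :: 'a fps"
  have "(fps_X * inv_X_minus_1) oo ?y = (fps_X oo ?y) * (inv_X_minus_1 oo ?y)"
    by (rule fps_compose_mult_distrib) simp
  then have "?y oo ?y = ?y * (fps_X - 1)"
    by (simp add: inv_X_minus_1_compose flip: fps_x_over_x_minus_1_eq)
  then show ?thesis
    by (simp add: fps_x_over_x_minus_1_eq mult.assoc inv_X_minus_1_mult)
qed

lemma fps_compose_mult_nth:
  assumes "b $ 0 = 0"
  shows "((a oo b) * c) $ n = (\<Sum>i=0..n. a $ i * (b ^ i * c) $ n :: 'a::comm_ring_1)"
proof -
  have "((a oo b) * c) $ n = (\<Sum>k=0..n. \<Sum>i=0..n. a $ i * (b ^ i) $ k * c $ (n - k))"
    unfolding fps_mult_nth[of "a oo b"] fps_compose_nth sum_distrib_right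
    by (intro sum.cong refl sum.mono_neutral_left)
       (auto simp: assms startsby_zero_power_prefix)
  also have "\<dots> = (\<Sum>i=0..n. a $ i * (b ^ i * c) $ n)"
    by (subst sum.swap) (simp add: fps_mult_nth sum_distrib_left mult.assoc)
  finally show ?thesis .
qed

definition twist :: "'a::field fps \<Rightarrow> 'a fps" where
  "twist \<phi> = (\<phi> oo fps_x_over_x_minus_1) * inverse (1 - fps_X)"

lemma twist_twist: "twist (twist \<phi>) = (\<phi>::'a::field fps)"
proof -
  have h: "inverse (1 - fps_X) oo fps_x_over_x_minus_1 = (1 - fps_X :: 'a fps)"
    by (simp add: inverse_1_minus_X fps_compose_uminus inv_X_minus_1_compose)
  have "\<phi> oo fps_x_over_x_minus_1 oo fps_x_over_x_minus_1 = \<phi>"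
    by (simp add: fps_compose_assoc[symmetric] fps_x_over_x_minus_1_compose_self)
  then have "twist (twist \<phi>) = \<phi> * ((1 - fps_X) * inverse (1 - fps_X))"
    by (simp add: twist_def fps_compose_mult_distrib h mult.assoc)
  then show ?thesis
    by (simp add: inverse_mult_eq_1')
qed

lemma twist_diff: "twist (\<phi> - \<psi>) = twist \<phi> - twist (\<psi>::'a::field fps)"
  by (simp add: twist_def fps_compose_sub_distrib algebra_simps)

lemma mem_F1_iff_twist_eq: "\<phi> \<in> F1 \<longleftrightarrow> twist \<phi> = (\<phi>::'a::field fps)"
proof -
  have u: "(1 - fps_X) * inverse (1 - fps_X) = (1::'a fps)"
    by (rule inverse_mult_eq_1') simp
  have "\<psi> = (1 - fps_X) * \<phi> \<longleftrightarrow> \<psi> * inverse (1 - fps_X) = \<phi>" for \<psi> :: "'a fps"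
  proof
    assume "\<psi> = (1 - fps_X) * \<phi>"
    then have "\<psi> * inverse (1 - fps_X) = \<phi> * ((1 - fps_X) * inverse (1 - fps_X))"
      by (simp only: ac_simps)
    then show "\<psi> * inverse (1 - fps_X) = \<phi>"
      by (simp only: u mult_1_right)
  next
    assume "\<psi> * inverse (1 - fps_X) = \<phi>"
    then have "(1 - fps_X) * \<phi> = \<psi> * ((1 - fps_X) * inverse (1 - fps_X))"
      by (auto simp only: ac_simps)
    then show "\<psi> = (1 - fps_X) * \<phi>"
      by (simp only: u mult_1_right)
  qed
  then show ?thesis
    by (simp add: F1_def twist_def)
qed

lemma twist_mult_nth:
  "(twist \<phi> * c) $ n = - (\<Sum>i=0..n. \<phi> $ i * (inv_X_minus_1 ^ Suc i * c) $ (n - i) :: 'a::field)"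
proof -
  let ?y = "fps_x_over_x_minus_1 :: 'a fps"
  have "(twist \<phi> * c) $ n = ((\<phi> oo ?y) * (inverse (1 - fps_X) * c)) $ n"
    by (simp add: twist_def mult.assoc)
  also have "\<dots> = (\<Sum>i=0..n. \<phi> $ i * (?y ^ i * (inverse (1 - fps_X) * c)) $ n)"
    by (rule fps_compose_mult_nth) simp
  also have "\<dots> = (\<Sum>i=0..n. - (\<phi> $ i * (inv_X_minus_1 ^ Suc i * c) $ (n - i)))"
  proof (rule sum.cong [OF refl])
    fix i assume "i \<in> {0..n}"
    have "?y ^ i * (inverse (1 - fps_X) * c) = - (fps_X ^ i * (inv_X_minus_1 ^ Suc i * c))"
      by (simp add: fps_x_over_x_minus_1_eq inverse_1_minus_X power_mult_distrib ac_simps)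
    with \<open>i \<in> {0..n}\<close> show "\<phi> $ i * (?y ^ i * (inverse (1 - fps_X) * c)) $ n
        = - (\<phi> $ i * (inv_X_minus_1 ^ Suc i * c) $ (n - i))"
      by (simp add: fps_X_power_mult_nth)
  qed
  finally show ?thesis
    by (simp add: sum_negf)
qed

lemma twist_nth_subdegree:
  "twist \<chi> $ subdegree \<chi> = (-1) ^ subdegree \<chi> * \<chi> $ subdegree (\<chi>::'a::field fps)"
proof -
  let ?d = "subdegree \<chi>"
  have "twist \<chi> $ ?d = - (\<Sum>i=0..?d. \<chi> $ i * (inv_X_minus_1 ^ Suc i :: 'a fps) $ (?d - i))"
    using twist_mult_nth[of \<chi> 1 ?d] by simp
  also have "\<dots> = - (\<chi> $ ?d * (inv_X_minus_1 ^ Suc ?d :: 'a fps) $ 0)"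
    by (subst sum.mono_neutral_right[of "{0..?d}" "{?d}"]) (auto intro: nth_less_subdegree_zero)
  finally show ?thesis
    by (simp only: inv_X_minus_1_power_nth) simp
qed

lemma odd_subdegree_if_twist_eq_uminus:
  assumes "\<chi> \<noteq> 0" and "twist \<chi> = - (\<chi>::'a::field_char_0 fps)"
  shows "odd (subdegree \<chi>)"
proof
  assume "even (subdegree \<chi>)"
  then have "- \<chi> $ subdegree \<chi> = \<chi> $ subdegree \<chi>"
    using twist_nth_subdegree[of \<chi>] assms(2) by simp
  with assms(1) show False
    by (simp add: minus_equation_iff)
qed

definition lam_poly :: "nat \<Rightarrow> 'a::field fps" where
  "lam_poly n = (fps_X - 1) ^ n * (fps_X - 2)"

definition lam :: "nat \<Rightarrow> 'a::field fps \<Rightarrow> 'a" where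
  "lam n \<phi> = (\<phi> * lam_poly n) $ (2*n+1)"

lemma lam_poly_eq: "lam_poly n = (fps_X - 1) ^ Suc n - ((fps_X - 1) ^ n :: 'a::field fps)"
proof -
  have "(fps_X - 2 :: 'a fps) = (fps_X - 1) - 1"
    by simp
  then show ?thesis
    by (simp only: lam_poly_def right_diff_distrib power_Suc2 mult_1_right)
qed

lemma lam_poly_nth:
  "(lam_poly n :: 'a::field fps) $ j
     = (-1) ^ (Suc n + j) * of_nat (Suc n choose j) - (-1) ^ (n + j) * of_nat (n choose j)"
  by (simp only: lam_poly_eq fps_sub_nth X_minus_1_power_nth)

lemma lam_poly_nth_eq_0: "Suc n < j \<Longrightarrow> (lam_poly n :: 'a::field fps) $ j = 0"
  by (simp add: lam_poly_nth binomial_eq_0)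

lemma lam_poly_nth_0: "(lam_poly n :: 'a::field fps) $ 0 = - 2 * (-1) ^ n"
  by (simp add: lam_poly_nth)

lemma lam_poly_nth_complement:
  assumes "k + j = Suc n"
  shows "(lam_poly n :: 'a::field fps) $ j = (-1) ^ k * (of_nat (Suc n choose j) + of_nat (n choose j))"
proof -
  have "Suc (n + j) = k + 2 * j"
    using assms by simp
  then have "(-1::'a) ^ Suc (n + j) = (-1) ^ k"
    by (simp only:) (simp add: power_add)
  then have "(-1::'a) ^ (n + j) = - ((-1) ^ k)"
    by (simp add: minus_equation_iff)
  then show ?thesis
    by (simp add: lam_poly_nth algebra_simps)
qed

(* For k = 0 and j = 0 the second binomial is 1 only because 0 - 1 = 0 on nat. *)
lemma inv_X_minus_1_power_diff_nth:
  "(inv_X_minus_1 ^ k - inv_X_minus_1 ^ Suc k :: 'a::field fps) $ j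
     = (-1) ^ k * (of_nat ((k + j) choose j) + of_nat ((k + j - 1) choose j))"
proof (cases k)
  case 0
  then show ?thesis
    by (cases j) (simp_all add: inv_X_minus_1_nth binomial_eq_0)
next
  case (Suc k')
  then show ?thesis
    by (simp only: fps_sub_nth inv_X_minus_1_power_nth) (simp add: algebra_simps)
qed

(* Both sides are coefficients of (x-1)^(a+1) - (x-1)^a, with a = n and a = n - i - 1; for
   i < n they vanish for degree reasons, for i \<ge> n the exponents are negative. *)
lemma inv_X_minus_1_power_mult_lam_poly_nth:
  assumes "i + j = 2 * n + 1"
  shows "(inv_X_minus_1 ^ Suc i * lam_poly n :: 'a::field fps) $ j = lam_poly n $ j"
proof (cases "i < n")
  case True
  then obtain d where n: "n = Suc i + d"
    using less_iff_Suc_add by auto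
  have "inv_X_minus_1 ^ Suc i * lam_poly n
      = (inv_X_minus_1 * (fps_X - 1)) ^ Suc i * (lam_poly d :: 'a fps)"
    by (simp only: lam_poly_def n power_add power_mult_distrib ac_simps)
  then have "inv_X_minus_1 ^ Suc i * lam_poly n = (lam_poly d :: 'a fps)"
    by (simp add: inv_X_minus_1_mult)
  then show ?thesis
    using assms n by (simp add: lam_poly_nth_eq_0)
next
  case False
  then obtain k where i: "i = n + k"
    using le_Suc_ex not_less by blast
  have "g ^ Suc (n + k) * (u ^ Suc n - u ^ n) = g ^ k * (g * u) ^ n * (g * u) - g ^ Suc k * (g * u) ^ n"
    for g u :: "'a fps"
    by (simp add: power_add power_mult_distrib algebra_simps)
  from this[of inv_X_minus_1 "fps_X - 1"]
  have eq: "inv_X_minus_1 ^ Suc i * lam_poly n = inv_X_minus_1 ^ k - (inv_X_minus_1 ^ Suc k :: 'a fps)"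
    by (simp only: lam_poly_eq i inv_X_minus_1_mult power_one mult_1_right)
  have "k + j = Suc n"
    using assms i by simp
  then show ?thesis
    by (simp only: eq inv_X_minus_1_power_diff_nth lam_poly_nth_complement) simp
qed

lemma lam_twist: "lam n (twist \<phi>) = - lam n (\<phi>::'a::field fps)"
proof -
  have "lam n (twist \<phi>)
      = - (\<Sum>i=0..2*n+1. \<phi> $ i * (inv_X_minus_1 ^ Suc i * lam_poly n) $ (2*n+1 - i))"
    by (simp only: lam_def twist_mult_nth)
  also have "\<dots> = - (\<Sum>i=0..2*n+1. \<phi> $ i * lam_poly n $ (2*n+1 - i))"
  proof (intro arg_cong[where f = uminus] sum.cong refl)
    fix i assume "i \<in> {0..2*n+1}"
    then have "i + (2*n+1 - i) = 2*n+1"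
      by simp
    then show "\<phi> $ i * (inv_X_minus_1 ^ Suc i * lam_poly n) $ (2*n+1 - i)
        = \<phi> $ i * lam_poly n $ (2*n+1 - i)"
      by (simp only: inv_X_minus_1_power_mult_lam_poly_nth)
  qed
  finally show ?thesis
    by (simp add: lam_def fps_mult_nth)
qed

lemma lam_eq_0_if_mem_F1: "\<phi> \<in> F1 \<Longrightarrow> lam n (\<phi>::'a::field_char_0 fps) = 0"
  using lam_twist[of n \<phi>] by (simp add: mem_F1_iff_twist_eq)

lemma choose_mult_choose_eq:
  assumes "j \<le> Suc n"
  shows "(2*n+1 choose j) * ((2*n+2 - j) choose (Suc n - j))
       = (2*n+1 choose Suc n) * ((Suc n choose j) + (n choose j))"
proof (cases "j \<le> n")
  case True
  have "(2*n+1 choose Suc n) * (Suc n choose j) = (2*n+1 choose j) * ((2*n+1 - j) choose (Suc n - j))"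
    using assms by (intro choose_mult) auto
  moreover have "(2*n+1 choose n) * (n choose j) = (2*n+1 choose j) * ((2*n+1 - j) choose (n - j))"
    using True by (intro choose_mult) auto
  moreover have "2*n+1 choose Suc n = 2*n+1 choose n"
    using binomial_symmetric[of n "2*n+1"] by (simp del: binomial_Suc_Suc)
  moreover have "(2*n+2 - j) choose (Suc n - j) = ((2*n+1 - j) choose (n - j)) + ((2*n+1 - j) choose (Suc n - j))"
    using True by (simp add: Suc_diff_le)
  ultimately show ?thesis
    by (simp only: add_mult_distrib2)
next
  case False
  with assms have "j = Suc n"
    by simp
  then show ?thesis
    by (simp add: binomial_eq_0 del: binomial_Suc_Suc)
qed

lemma lam_eq_sum:
  "lam n \<phi> = (\<Sum>i=0..Suc n. (-1) ^ i * \<phi> $ (n + i)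
     * (of_nat (Suc n choose (Suc n - i)) + of_nat (n choose (Suc n - i))) :: 'a::field)"
proof -
  have "lam n \<phi> = (\<Sum>k=0..2*n+1. \<phi> $ k * lam_poly n $ (2*n+1 - k))"
    by (simp add: lam_def fps_mult_nth)
  also have "\<dots> = (\<Sum>k=n..2*n+1. \<phi> $ k * lam_poly n $ (2*n+1 - k))"
    by (rule sum.mono_neutral_right) (auto simp: lam_poly_nth_eq_0)
  also have "\<dots> = (\<Sum>i=0..Suc n. \<phi> $ (n + i) * lam_poly n $ (Suc n - i))"
    by (rule trans[OF sum.atLeastAtMost_shift_0]) (auto intro!: sum.cong)
  also have "\<dots> = (\<Sum>i=0..Suc n. (-1) ^ i * \<phi> $ (n + i)
      * (of_nat (Suc n choose (Suc n - i)) + of_nat (n choose (Suc n - i))))"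
    by (intro sum.cong refl) (simp add: lam_poly_nth_complement)
  finally show ?thesis .
qed

lemma coeff_cond_sum_eq_lam:
  "(\<Sum>i=0..Suc n. (-1) ^ i * of_nat ((2 * Suc n - 1) choose (Suc n - i))
       * of_nat ((Suc n + i) choose i) * \<phi> $ (Suc n + i - 1))
   = of_nat (2*n+1 choose Suc n) * lam n (\<phi>::'a::field fps)"
  unfolding lam_eq_sum sum_distrib_left
proof (intro sum.cong refl)
  fix i assume "i \<in> {0..Suc n}"
  then have "2*n+2 - (Suc n - i) = Suc n + i" "Suc n - (Suc n - i) = i"
    by auto
  then have "(2*n+1 choose (Suc n - i)) * ((Suc n + i) choose i)
      = (2*n+1 choose Suc n) * ((Suc n choose (Suc n - i)) + (n choose (Suc n - i)))"
    using choose_mult_choose_eq[of "Suc n - i" n] by simp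
  then have binomials: "(of_nat (2*n+1 choose (Suc n - i)) :: 'a) * of_nat ((Suc n + i) choose i)
      = of_nat (2*n+1 choose Suc n) * (of_nat (Suc n choose (Suc n - i)) + of_nat (n choose (Suc n - i)))"
    by (simp only: of_nat_mult [symmetric] of_nat_add [symmetric])
  have "2 * Suc n - 1 = 2*n+1" "Suc n + i - 1 = n + i"
    by simp_all
  then have "(-1) ^ i * of_nat ((2 * Suc n - 1) choose (Suc n - i))
      * of_nat ((Suc n + i) choose i) * \<phi> $ (Suc n + i - 1)
    = (-1) ^ i * \<phi> $ (n + i) * (of_nat (2*n+1 choose (Suc n - i)) * of_nat ((Suc n + i) choose i))"
    by (simp only: ac_simps)
  also have "\<dots> = (-1) ^ i * \<phi> $ (n + i) * (of_nat (2*n+1 choose Suc n)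
      * (of_nat (Suc n choose (Suc n - i)) + of_nat (n choose (Suc n - i))))"
    by (simp only: binomials)
  also have "\<dots> = of_nat (2*n+1 choose Suc n) * ((-1) ^ i * \<phi> $ (n + i)
      * (of_nat (Suc n choose (Suc n - i)) + of_nat (n choose (Suc n - i))))"
    by (simp only: ac_simps)
  finally show "(-1) ^ i * of_nat ((2 * Suc n - 1) choose (Suc n - i))
      * of_nat ((Suc n + i) choose i) * \<phi> $ (Suc n + i - 1)
    = of_nat (2*n+1 choose Suc n) * ((-1) ^ i * \<phi> $ (n + i)
      * (of_nat (Suc n choose (Suc n - i)) + of_nat (n choose (Suc n - i))))" .
qed

lemma coeff_cond_iff_lam: "coeff_cond \<phi> \<longleftrightarrow> (\<forall>n. lam n (\<phi>::'a::field_char_0 fps) = 0)"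
proof -
  have all_ge_1: "(\<forall>m::nat. m \<ge> 1 \<longrightarrow> P m) \<longleftrightarrow> (\<forall>n. P (Suc n))" for P
    by (metis Suc_le_D Suc_le_mono le0 One_nat_def)
  have "(of_nat (2*n+1 choose Suc n) :: 'a) \<noteq> 0" for n
    by (simp only: of_nat_eq_0_iff binomial_eq_0_iff)
  then show ?thesis
    unfolding coeff_cond_def all_ge_1 coeff_cond_sum_eq_lam by simp
qed

theorem mem_F1_iff_coeff_cond: "\<phi> \<in> F1 \<longleftrightarrow> coeff_cond (\<phi>::'a::field_char_0 fps)"
proof
  assume "\<phi> \<in> F1"
  then show "coeff_cond \<phi>"
    by (simp add: coeff_cond_iff_lam lam_eq_0_if_mem_F1)
next
  assume "coeff_cond \<phi>"
  show "\<phi> \<in> F1"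
  proof (rule ccontr)
    define \<chi> where "\<chi> = twist \<phi> - \<phi>"
    assume "\<phi> \<notin> F1"
    then have "\<chi> \<noteq> 0"
      by (simp add: \<chi>_def mem_F1_iff_twist_eq)
    moreover have "twist \<chi> = - \<chi>"
      by (simp add: \<chi>_def twist_diff twist_twist)
    ultimately obtain n where n: "subdegree \<chi> = 2 * n + 1"
      using odd_subdegree_if_twist_eq_uminus oddE by blast
    have "lam n \<chi> = \<chi> $ (2 * n + 1) * lam_poly n $ 0"
      using nth_subdegree_mult_left[of \<chi> "lam_poly n"] by (simp add: lam_def n)
    then have "lam n \<chi> \<noteq> 0"
      using \<open>\<chi> \<noteq> 0\<close> nth_subdegree_nonzero[of \<chi>] by (simp add: n lam_poly_nth_0)
    moreover have "lam n \<chi> = lam n (twist \<phi>) - lam n \<phi>"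
      unfolding \<chi>_def lam_def by (simp only: left_diff_distrib fps_sub_nth)
    ultimately show False
      using \<open>coeff_cond \<phi>\<close> by (simp add: lam_twist coeff_cond_iff_lam)
  qed
qed

theorem lemma4p4:
  shows "(\<forall>\<phi> :: rat fps. \<phi> \<in> F1 \<longleftrightarrow> coeff_cond \<phi>)
       \<and> (\<forall>\<phi> :: real fps. \<phi> \<in> F1 \<longleftrightarrow> coeff_cond \<phi>)
       \<and> (\<forall>\<phi> :: complex fps. \<phi> \<in> F1 \<longleftrightarrow> coeff_cond \<phi>)"
  by (intro conjI allI mem_F1_iff_coeff_cond)

end
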